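(* Let $C$ be a commutative ring with identity and $\lambda\in C$. Let $\text{Ш}_C(C)$ denote the shuffle Baxter $C$-algebra of weight $\lambda$ on $C$ (equivalently the free Baxter $C$-algebra of weight $\lambda$ on the empty set), and $\widehat{\text{Ш}}_C(C)$ its completion. \begin{enumerate} \item If $C$ is a noetherian $\mathbb{Q}$-algebra, then $\text{Ш}_C(C)$ is a noetherian ring for every $\lambda\in C$. \item If $C$ is a noetherian $\mathbb{Q}$-algebra and if $\lambda =0$, then $\widehat{\text{Ш}}_C(C)$ is a noetherian ring. \item If $C$ is a $\mathbb{Q}$-algebra, $\lambda\in C$ is not a zero divisor and $\cap_{n\in\mathbb{N}}\lambda^n C \neq 0$, then $\widehat{\text{Ш}}_C(C)$ is not a noetherian ring. \item If $C$ is not a $\mathbb{Q}$-algebra, then $\text{Ш}_C(C)$ and $\widehat{\text{Ш}}_C(C)$ are not noetherian rings. \end{enumerate}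
   Context: All rings are commutative with identity. A Baxter $C$-algebra of weight $\lambda$ is a commutative $C$-algebra $R$ with a $C$-linear operator $P$ satisfying $P(x)P(y)=P(xP(y))+P(yP(x))+\lambda P(xy)$. Here $\text{Ш}_C(C)=\bigoplus_{n\in\mathbb{N}} C\,\mathbf{1}^{\otimes (n+1)}$ and its completion $\widehat{\text{Ш}}_C(C)=\prod_{n\in\mathbb{N}} C\,\mathbf{1}^{\otimes (n+1)}$ (completion with respect to the filtration $\mathrm{Fil}^k=\bigoplus_{n\geq k} C\mathbf{1}^{\otimes(n+1)}$), with multiplication determined by $\mathbf{1}^{\otimes (m+1)} \mathbf{1}^{\otimes (n+1)} = \sum_{k=0}^m \binom{m+n-k}{n}\binom{n}{k} \lambda^k \mathbf{1}^{\otimes (m+n+1-k)}$ for $m,n\in\mathbb{N}$, and Baxter operator $P(\mathbf{1}^{\otimes(n+1)})=\mathbf{1}^{\otimes(n+2)}$. *)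

theory Defs
  imports "HOL-Algebra.Ring_Divisibility"
begin

definition type_ring :: "('a::comm_ring_1) ring" where
  "type_ring = \<lparr>carrier = UNIV, mult = (*), one = 1, zero = 0, add = (+)\<rparr>"

definition is_Q_algebra :: "'a::comm_ring_1 itself \<Rightarrow> bool" where
  "is_Q_algebra _ \<longleftrightarrow> (\<forall>n::nat. n > 0 \<longrightarrow> (of_nat n :: 'a) dvd 1)"

text \<open>Elements of the (completed) shuffle Baxter algebra: a function a with a n the
  coefficient of 1^{\<otimes>(n+1)}. Product from
  1^{\<otimes>(m+1)} 1^{\<otimes>(n+1)} = \<Sum>k=0..m (m+n-k choose n)(n choose k) \<lambda>^k 1^{\<otimes>(m+n+1-k)};
  the coefficient at p collects the terms with m = p - n + k.\<close>
definition sha_mult :: "'a::comm_ring_1 \<Rightarrow> (nat \<Rightarrow> 'a) \<Rightarrow> (nat \<Rightarrow> 'a) \<Rightarrow> (nat \<Rightarrow> 'a)" where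
  "sha_mult lam a b = (\<lambda>p. \<Sum>n\<le>p. \<Sum>k\<le>n.
      of_nat (p choose n) * of_nat (n choose k) * lam ^ k * a (p - n + k) * b n)"

definition sha_one :: "nat \<Rightarrow> 'a::comm_ring_1" where
  "sha_one = (\<lambda>n. if n = 0 then 1 else 0)"

text \<open>Sha_C(C) = direct sum: finitely supported coefficient sequences.\<close>
definition sha_ring :: "'a::comm_ring_1 \<Rightarrow> (nat \<Rightarrow> 'a) ring" where
  "sha_ring lam = \<lparr>carrier = {a. finite {n. a n \<noteq> 0}}, mult = sha_mult lam,
      one = sha_one, zero = (\<lambda>n. 0), add = (\<lambda>a b n. a n + b n)\<rparr>"

text \<open>Completion = direct product: all coefficient sequences.\<close>
definition sha_hat_ring :: "'a::comm_ring_1 \<Rightarrow> (nat \<Rightarrow> 'a) ring" where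
  "sha_hat_ring lam = \<lparr>carrier = UNIV, mult = sha_mult lam,
      one = sha_one, zero = (\<lambda>n. 0), add = (\<lambda>a b n. a n + b n)\<rparr>"

end

theory Submission
  imports Defs "HOL-Computational_Algebra.Polynomial" "HOL-Computational_Algebra.Primes"
begin

(* The maps a \<mapsto> \<Sum>n\<le>M. (M choose n) lam^n a n are ring homomorphisms from the shuffle
   algebra to C, and for lam not a zero divisor they separate points. This yields the ring
   axioms over C[X] with weight X, and then for every weight by evaluating at lam.

   Over a noetherian Q-algebra, multiplying by 1^{\<otimes>2} shows that the ideals of leading
   coefficients of elements of degree d increase with d; for weight 0 the same holds for
   lowest coefficients of elements of order d. The usual proofs of the Hilbert basis theorem
   for polynomials and for power series then go through.

   If a prime p is not invertible in C, then p divides all the inner binomial coefficients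
   (p^i choose n), so "p divides a 0 and a (p^i) for all i > j" cuts out a strictly
   increasing chain of ideals. If some x \<noteq> 0 is divisible by every power of lam, the ideals
   of the completion on which the homomorphisms for M \<ge> j vanish never stabilise: inverting
   the binomial transform gives an element on which exactly the j-th homomorphism takes the
   value x. *)

section \<open>Characters of the shuffle product\<close>

lemma choose_mult_choose_eq_sum:
  assumes "m \<le> M" "n \<le> M"
  shows "(M choose m) * (M choose n) =
    (\<Sum>k | k \<le> m \<and> k \<le> n \<and> m + n - k \<le> M.
      (M choose (m + n - k)) * ((m + n - k) choose n) * (n choose k))"
proof -
  have "M choose m = (\<Sum>k\<le>m. (n choose k) * ((M - n) choose (m - k)))"
    using vandermonde[of n "M - n" m] assms by simp
  then have "(M choose m) * (M choose n) =
      (\<Sum>k\<le>m. (M choose n) * (n choose k) * ((M - n) choose (m - k)))"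
    by (simp add: sum_distrib_left sum_distrib_right mult_ac)
  also have "\<dots> = (\<Sum>k | k \<le> m \<and> k \<le> n \<and> m + n - k \<le> M.
      (M choose n) * (n choose k) * ((M - n) choose (m - k)))"
    by (rule sum.mono_neutral_right) auto
  also have "\<dots> = (\<Sum>k | k \<le> m \<and> k \<le> n \<and> m + n - k \<le> M.
      (M choose (m + n - k)) * ((m + n - k) choose n) * (n choose k))"
  proof (rule sum.cong[OF refl])
    fix k assume "k \<in> {k. k \<le> m \<and> k \<le> n \<and> m + n - k \<le> M}"
    then have "(M choose (m + n - k)) * ((m + n - k) choose n) =
        (M choose n) * ((M - n) choose (m - k))"
      using choose_mult[of n "m + n - k" M] by auto
    then show "(M choose n) * (n choose k) * ((M - n) choose (m - k)) =
        (M choose (m + n - k)) * ((m + n - k) choose n) * (n choose k)"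
      by (simp add: mult_ac)
  qed
  finally show ?thesis .
qed

definition sha_eval :: "'a::comm_ring_1 \<Rightarrow> nat \<Rightarrow> (nat \<Rightarrow> 'a) \<Rightarrow> 'a" where
  "sha_eval lam M a = (\<Sum>n\<le>M. of_nat (M choose n) * lam ^ n * a n)"

lemma sha_eval_mult: "sha_eval lam M (sha_mult lam a b) = sha_eval lam M a * sha_eval lam M b"
proof -
  define T where "T = (SIGMA p:{..M}. SIGMA n:{..p}. {..n})"
  define S where "S = (SIGMA m:{..M}. SIGMA n:{..M}. {k. k \<le> m \<and> k \<le> n \<and> m + n - k \<le> M})"
  define G where "G m n k = of_nat ((M choose (m + n - k)) * ((m + n - k) choose n) * (n choose k)) *
      lam ^ (m + n) * a m * b n" for m n k
  have fin: "finite {k. k \<le> m \<and> k \<le> n \<and> m + n - k \<le> M}" for m n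
    by (rule finite_subset[of _ "{..m}"]) auto
  have "sha_eval lam M (sha_mult lam a b) =
      (\<Sum>p\<le>M. \<Sum>n\<le>p. \<Sum>k\<le>n. G (p + k - n) n k)"
    unfolding sha_eval_def sha_mult_def sum_distrib_left
    by (intro sum.cong refl) (auto simp: G_def power_add mult_ac)
  also have "\<dots> = (\<Sum>(p, n, k)\<in>T. G (p + k - n) n k)"
    unfolding T_def by (simp add: sum.Sigma)
  also have "\<dots> = (\<Sum>(m, n, k)\<in>S. G m n k)"
    by (rule sum.reindex_bij_witness[where i = "\<lambda>(m, n, k). (m + n - k, n, k)"
          and j = "\<lambda>(p, n, k). (p + k - n, n, k)"])
      (auto simp: S_def T_def)
  also have "\<dots> = (\<Sum>m\<le>M. \<Sum>n\<le>M. \<Sum>k | k \<le> m \<and> k \<le> n \<and> m + n - k \<le> M. G m n k)"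
    unfolding S_def by (simp add: sum.Sigma fin)
  also have "\<dots> = (\<Sum>m\<le>M. \<Sum>n\<le>M. of_nat ((M choose m) * (M choose n)) * lam ^ (m + n) * a m * b n)"
    by (intro sum.cong refl) (simp add: choose_mult_choose_eq_sum G_def sum_distrib_right)
  also have "\<dots> = sha_eval lam M a * sha_eval lam M b"
    unfolding sha_eval_def sum_product by (intro sum.cong refl) (simp add: power_add mult_ac)
  finally show ?thesis .
qed

lemma sha_eval_zero: "sha_eval lam M (\<lambda>n. 0) = 0"
  unfolding sha_eval_def by simp

lemma sha_eval_add: "sha_eval lam M (\<lambda>n. a n + b n) = sha_eval lam M a + sha_eval lam M b"
  unfolding sha_eval_def by (simp add: sum.distrib distrib_left)

lemma sha_eval_uminus: "sha_eval lam M (\<lambda>n. - a n) = - sha_eval lam M a"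
  unfolding sha_eval_def by (simp add: sum_negf)

lemma sha_eval_one: "sha_eval lam M sha_one = 1"
  unfolding sha_eval_def sha_one_def by (simp add: if_distrib sum.delta cong: if_cong)

lemma sha_eval_injective:
  fixes lam :: "'a::comm_ring_1"
  assumes regular: "\<forall>x. lam * x = 0 \<longrightarrow> x = 0"
    and eq: "\<And>M. sha_eval lam M a = sha_eval lam M b"
  shows "a = b"
proof
  have pow_regular: "lam ^ k * x = 0 \<Longrightarrow> x = 0" for k x
    by (induction k arbitrary: x) (auto simp: mult.assoc dest: regular[rule_format])
  fix n show "a n = b n"
  proof (induction n rule: less_induct)
    case (less n)
    have "0 = sha_eval lam n a - sha_eval lam n b" using eq by simp
    also have "\<dots> = (\<Sum>m\<le>n. of_nat (n choose m) * lam ^ m * (a m - b m))"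
      unfolding sha_eval_def by (simp add: sum_subtractf algebra_simps)
    also have "\<dots> = lam ^ n * (a n - b n)"
      by (subst sum.mono_neutral_right[of _ "{n}"]) (use less in auto)
    finally show ?case using pow_regular[of n "a n - b n"] by simp
  qed
qed

lemma sha_mult_assoc_regular:
  assumes "\<forall>x. lam * x = 0 \<longrightarrow> x = 0"
  shows "sha_mult lam (sha_mult lam a b) c = sha_mult lam a (sha_mult lam b c)"
  by (rule sha_eval_injective[of lam]) (simp_all add: assms sha_eval_mult mult_ac)

lemma sha_mult_commute_regular:
  assumes "\<forall>x. lam * x = 0 \<longrightarrow> x = 0"
  shows "sha_mult lam a b = sha_mult lam b a"
  by (rule sha_eval_injective[of lam]) (simp_all add: assms sha_eval_mult mult_ac)

lemma sha_mult_one_left_regular: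
  assumes "\<forall>x. lam * x = 0 \<longrightarrow> x = 0"
  shows "sha_mult lam sha_one a = a"
  by (rule sha_eval_injective[of lam]) (simp_all add: assms sha_eval_mult sha_eval_one)

lemma sha_mult_poly_eval:
  "sha_mult lam (\<lambda>n. poly (A n) lam) (\<lambda>n. poly (B n) lam) =
    (\<lambda>p. poly (sha_mult [:0, 1:] A B p) lam)"
  unfolding sha_mult_def by (simp add: poly_sum)

lemma sha_mult_assoc: "sha_mult lam (sha_mult lam a b) c = sha_mult lam a (sha_mult lam b c)"
proof -
  have "sha_mult lam (sha_mult lam (\<lambda>n. poly (A n) lam) (\<lambda>n. poly (B n) lam)) (\<lambda>n. poly (C n) lam) =
      sha_mult lam (\<lambda>n. poly (A n) lam) (sha_mult lam (\<lambda>n. poly (B n) lam) (\<lambda>n. poly (C n) lam))"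
    for A B C
    by (simp add: sha_mult_poly_eval sha_mult_assoc_regular[of "[:0, 1:]"])
  from this[of "\<lambda>n. [:a n:]" "\<lambda>n. [:b n:]" "\<lambda>n. [:c n:]"] show ?thesis by simp
qed

lemma sha_mult_commute: "sha_mult lam a b = sha_mult lam b a"
proof -
  have "sha_mult lam (\<lambda>n. poly (A n) lam) (\<lambda>n. poly (B n) lam) =
      sha_mult lam (\<lambda>n. poly (B n) lam) (\<lambda>n. poly (A n) lam)" for A B
    by (simp add: sha_mult_poly_eval sha_mult_commute_regular[of "[:0, 1:]"])
  from this[of "\<lambda>n. [:a n:]" "\<lambda>n. [:b n:]"] show ?thesis by simp
qed

lemma sha_mult_one_left: "sha_mult lam sha_one a = a"
proof -
  have one: "(\<lambda>n. poly (sha_one n) lam) = sha_one"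
    by (simp add: sha_one_def fun_eq_iff)
  have "sha_mult lam (\<lambda>n. poly (sha_one n) lam) (\<lambda>n. poly (A n) lam) = (\<lambda>n. poly (A n) lam)" for A
    by (simp add: sha_mult_poly_eval sha_mult_one_left_regular[of "[:0, 1:]"])
  from this[of "\<lambda>n. [:a n:]"] show ?thesis
    unfolding one by simp
qed

lemma sha_mult_add_left:
  "sha_mult lam (\<lambda>n. a n + b n) c = (\<lambda>n. sha_mult lam a c n + sha_mult lam b c n)"
  unfolding sha_mult_def by (simp add: sum.distrib[symmetric] algebra_simps)

section \<open>The shuffle rings\<close>

definition vanishes_on :: "nat set \<Rightarrow> (nat \<Rightarrow> 'a::zero) \<Rightarrow> bool" where
  "vanishes_on Z a \<longleftrightarrow> (\<forall>i\<in>Z. a i = 0)"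

(* sha_monomial t c is c 1^{\<otimes>(t+1)}. *)
definition sha_monomial :: "nat \<Rightarrow> 'a::zero \<Rightarrow> nat \<Rightarrow> 'a" where
  "sha_monomial t c = (\<lambda>n. if n = t then c else 0)"

lemma finite_support_iff_vanishes_above: "finite {n. a n \<noteq> 0} \<longleftrightarrow> (\<exists>d. vanishes_on {d<..} a)"
  unfolding vanishes_on_def finite_nat_set_iff_bounded_le
  by (metis (mono_tags, lifting) greaterThan_iff mem_Collect_eq not_le)

lemma sha_mult_vanishes_above:
  assumes a: "vanishes_on {d<..} a" and b: "vanishes_on {e<..} b"
  shows "vanishes_on {d + e<..} (sha_mult lam a b)"
    and "sha_mult lam a b (d + e) = of_nat ((d + e) choose e) * a d * b e"
proof -
  have zero: "of_nat (p choose n) * of_nat (n choose k) * lam ^ k * a (p + k - n) * b n = 0"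
    if "n \<le> p" "k \<le> n" "d + e < p \<or> (p = d + e \<and> (n, k) \<noteq> (e, 0))" for p n k
  proof (cases "e < n")
    case True then show ?thesis using b by (simp add: vanishes_on_def)
  next
    case False
    then have "d < p + k - n" using that by auto
    then show ?thesis using a by (simp add: vanishes_on_def)
  qed
  then show "vanishes_on {d + e<..} (sha_mult lam a b)"
    unfolding vanishes_on_def sha_mult_def by (auto intro!: sum.neutral)
  have "sha_mult lam a b (d + e) = (\<Sum>n\<in>{e}. \<Sum>k\<le>n.
      of_nat ((d + e) choose n) * of_nat (n choose k) * lam ^ k * a (d + e - n + k) * b n)"
    unfolding sha_mult_def by (rule sum.mono_neutral_right) (auto intro!: sum.neutral zero)
  also have "\<dots> = (\<Sum>k\<le>e.
      of_nat ((d + e) choose e) * of_nat (e choose k) * lam ^ k * a (d + k) * b e)"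
    by simp
  also have "\<dots> = (\<Sum>k\<in>{0}.
      of_nat ((d + e) choose e) * of_nat (e choose k) * lam ^ k * a (d + k) * b e)"
    by (rule sum.mono_neutral_right) (use a in \<open>auto simp: vanishes_on_def\<close>)
  also have "\<dots> = of_nat ((d + e) choose e) * a d * b e"
    by simp
  finally show "sha_mult lam a b (d + e) = of_nat ((d + e) choose e) * a d * b e" .
qed

lemma sha_mult_weight_zero: "sha_mult 0 a b p = (\<Sum>n\<le>p. of_nat (p choose n) * a (p - n) * b n)"
  unfolding sha_mult_def
proof (rule sum.cong[OF refl])
  fix n assume "n \<in> {..p}"
  have "(\<Sum>k\<le>n. of_nat (p choose n) * of_nat (n choose k) * 0 ^ k * a (p - n + k) * b n) =
      (\<Sum>k\<in>{0}. of_nat (p choose n) * of_nat (n choose k) * 0 ^ k * a (p - n + k) * b n)"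
    by (rule sum.mono_neutral_right) (auto simp: power_0_left)
  then show "(\<Sum>k\<le>n. of_nat (p choose n) * of_nat (n choose k) * 0 ^ k * a (p - n + k) * b n) =
      of_nat (p choose n) * a (p - n) * b n"
    by simp
qed

lemma sha_mult_weight_zero_vanishes_below:
  assumes a: "vanishes_on {..<d} a" and b: "vanishes_on {..<e} b"
  shows "vanishes_on {..<d + e} (sha_mult 0 a b)"
    and "sha_mult 0 a b (d + e) = of_nat ((d + e) choose e) * a d * b e"
proof -
  have zero: "of_nat (p choose n) * a (p - n) * b n = 0"
    if "n \<le> p" "p < d + e \<or> (p = d + e \<and> n \<noteq> e)" for p n
  proof (cases "n < e")
    case True then show ?thesis using b by (simp add: vanishes_on_def)
  next
    case False
    then have "p - n < d" using that by auto
    then show ?thesis using a by (simp add: vanishes_on_def)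
  qed
  then show "vanishes_on {..<d + e} (sha_mult 0 a b)"
    unfolding vanishes_on_def sha_mult_weight_zero by (auto intro!: sum.neutral)
  have "sha_mult 0 a b (d + e) = (\<Sum>n\<in>{e}. of_nat ((d + e) choose n) * a (d + e - n) * b n)"
    unfolding sha_mult_weight_zero by (rule sum.mono_neutral_right) (use zero in auto)
  then show "sha_mult 0 a b (d + e) = of_nat ((d + e) choose e) * a d * b e"
    by simp
qed

lemma cring_sha_hat_ring: "cring (sha_hat_ring lam)"
proof (rule cringI)
  show "abelian_group (sha_hat_ring lam)"
    by (rule abelian_groupI)
      (auto simp: sha_hat_ring_def add.assoc add.commute intro!: exI[of _ "\<lambda>n. - _ n"])
  show "comm_monoid (sha_hat_ring lam)"
    by (rule comm_monoidI)
      (auto simp: sha_hat_ring_def sha_mult_assoc sha_mult_one_left sha_mult_commute[of lam])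
qed (simp add: sha_hat_ring_def sha_mult_add_left)

lemma cring_sha_ring: "cring (sha_ring lam)"
proof (rule cringI)
  have add_closed: "finite {n. a n + b n \<noteq> 0}" if "finite {n. a n \<noteq> 0}" "finite {n. b n \<noteq> 0}"
    for a b :: "nat \<Rightarrow> 'a"
    by (rule finite_subset[of _ "{n. a n \<noteq> 0} \<union> {n. b n \<noteq> 0}"]) (use that in auto)
  show "abelian_group (sha_ring lam)"
  proof (rule abelian_groupI)
    fix x assume "x \<in> carrier (sha_ring lam)"
    then show "\<exists>y\<in>carrier (sha_ring lam). y \<oplus>\<^bsub>sha_ring lam\<^esub> x = \<zero>\<^bsub>sha_ring lam\<^esub>"
      by (intro bexI[of _ "\<lambda>n. - x n"]) (auto simp: sha_ring_def)
  qed (auto simp: sha_ring_def add.assoc add.commute add_closed)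
  have mult_closed: "finite {n. sha_mult lam a b n \<noteq> 0}"
    if "finite {n. a n \<noteq> 0}" "finite {n. b n \<noteq> 0}" for a b :: "nat \<Rightarrow> 'a"
    using that sha_mult_vanishes_above(1) unfolding finite_support_iff_vanishes_above by blast
  have one_closed: "finite {n. sha_one n \<noteq> (0::'a)}"
    by (rule finite_subset[of _ "{0}"]) (auto simp: sha_one_def)
  show "comm_monoid (sha_ring lam)"
    by (rule comm_monoidI) (auto simp: sha_ring_def sha_mult_assoc sha_mult_one_left
        sha_mult_commute[of lam] mult_closed one_closed)
qed (simp add: sha_ring_def sha_mult_add_left)

lemma sha_mult_monomial_zero_left: "sha_mult lam (sha_monomial 0 s) a = (\<lambda>n. s * a n)"
proof
  fix p
  have "sha_mult lam a (sha_monomial 0 s) p =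
      (\<Sum>n\<in>{0}. \<Sum>k\<le>n.
        of_nat (p choose n) * of_nat (n choose k) * lam ^ k * a (p - n + k) * sha_monomial 0 s n)"
    unfolding sha_mult_def by (rule sum.mono_neutral_right) (auto simp: sha_monomial_def)
  then show "sha_mult lam (sha_monomial 0 s) a p = s * a p"
    by (simp add: sha_mult_commute[of lam "sha_monomial 0 s" a])
      (simp add: sha_monomial_def mult.commute)
qed

locale shuffle_ring = cring R for R :: "(nat \<Rightarrow> 'a::comm_ring_1) ring" (structure) +
  fixes lam :: 'a
  assumes mult_eq: "mult R = sha_mult lam"
    and add_eq: "add R = (\<lambda>a b n. a n + b n)"
    and zero_eq: "zero R = (\<lambda>n. 0)"
    and finite_support_mem: "finite {n. a n \<noteq> 0} \<Longrightarrow> a \<in> carrier R"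

lemma shuffle_ring_sha_ring: "shuffle_ring (sha_ring lam) lam"
  using cring_sha_ring by (simp add: shuffle_ring_def shuffle_ring_axioms_def sha_ring_def)

lemma shuffle_ring_sha_hat_ring: "shuffle_ring (sha_hat_ring lam) lam"
  using cring_sha_hat_ring by (simp add: shuffle_ring_def shuffle_ring_axioms_def sha_hat_ring_def)

context shuffle_ring
begin

lemma monomial_mem: "sha_monomial t c \<in> carrier R"
  by (rule finite_support_mem, rule finite_subset[of _ "{t}"]) (auto simp: sha_monomial_def)

lemma a_inv_eq: "a \<in> carrier R \<Longrightarrow> \<ominus> a = (\<lambda>n. - a n)"
  using r_neg[of a] by (auto simp: add_eq zero_eq fun_eq_iff eq_neg_iff_add_eq_0 add.commute)

lemma ideal_of_closed_predicate:
  assumes "P (\<lambda>n. 0)" "\<And>a b. P a \<Longrightarrow> P b \<Longrightarrow> P (\<lambda>n. a n + b n)" "\<And>a. P a \<Longrightarrow> P (\<lambda>n. - a n)"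
    "\<And>r a. r \<in> carrier R \<Longrightarrow> a \<in> carrier R \<Longrightarrow> P a \<Longrightarrow> P (sha_mult lam r a)"
  shows "ideal {a \<in> carrier R. P a} R"
proof (intro idealI ring_axioms add.subgroupI)
  show "{a \<in> carrier R. P a} \<noteq> {}"
    using zero_closed assms(1) by (auto simp: zero_eq)
  have "(\<lambda>n. a n + b n) \<in> carrier R" "(\<lambda>n. - a n) \<in> carrier R" "sha_mult lam a b \<in> carrier R"
    if "a \<in> carrier R" "b \<in> carrier R" for a b
    using add.m_closed[OF that] a_inv_closed[OF that(1)] m_closed[OF that] a_inv_eq[OF that(1)]
    by (simp_all add: add_eq mult_eq)
  then show "\<And>a. a \<in> {a \<in> carrier R. P a} \<Longrightarrow> \<ominus> a \<in> {a \<in> carrier R. P a}"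
    and "\<And>a b. a \<in> {a \<in> carrier R. P a} \<Longrightarrow> b \<in> {a \<in> carrier R. P a} \<Longrightarrow> a \<oplus> b \<in> {a \<in> carrier R. P a}"
    and "\<And>a x. a \<in> {a \<in> carrier R. P a} \<Longrightarrow> x \<in> carrier R \<Longrightarrow> x \<otimes> a \<in> {a \<in> carrier R. P a}"
    using assms by (auto simp: a_inv_eq add_eq mult_eq)
  then show "\<And>a x. a \<in> {a \<in> carrier R. P a} \<Longrightarrow> x \<in> carrier R \<Longrightarrow> a \<otimes> x \<in> {a \<in> carrier R. P a}"
    by (simp add: mult_eq sha_mult_commute[of lam _])
qed auto

context
  fixes J assumes J: "ideal J R"
begin

lemma ideal_zero_mem: "(\<lambda>n. 0) \<in> J"
  using ideal.axioms(1)[OF J] additive_subgroup.zero_closed zero_eq by metis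

lemma ideal_add_mem: "a \<in> J \<Longrightarrow> b \<in> J \<Longrightarrow> (\<lambda>n. a n + b n) \<in> J"
  using additive_subgroup.a_closed[OF ideal.axioms(1)[OF J]] by (simp add: add_eq)

lemma ideal_diff_mem: "a \<in> J \<Longrightarrow> b \<in> J \<Longrightarrow> (\<lambda>n. a n - b n) \<in> J"
  using ideal_add_mem[of a "\<ominus> b"] additive_subgroup.a_inv_closed[OF ideal.axioms(1)[OF J]]
    a_inv_eq[OF ideal.Icarr[OF J]] by simp

lemma ideal_mult_mem: "r \<in> carrier R \<Longrightarrow> a \<in> J \<Longrightarrow> sha_mult lam r a \<in> J"
  using ideal.I_l_closed[OF J] by (simp add: mult_eq)

lemma ideal_sum_mem: "finite S \<Longrightarrow> (\<And>s. s \<in> S \<Longrightarrow> X s \<in> J) \<Longrightarrow> (\<lambda>n. \<Sum>s\<in>S. X s n) \<in> J"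
  by (induction S rule: finite_induct) (auto simp: ideal_zero_mem ideal_add_mem)

end

end

section \<open>Failure of the ascending chain condition\<close>

lemma (in noetherian_ring) ascending_chain_stabilizes:
  assumes "\<And>j. ideal (I j) R" "\<And>j. I j \<subseteq> I (Suc j)"
  shows "\<exists>D. \<forall>d. I d \<subseteq> I D"
proof -
  have "mono I" using assms(2) by (simp add: mono_iff_le_Suc)
  then have "I j \<subseteq> I k \<or> I k \<subseteq> I j" for j k
    using nat_le_linear[of j k] by (auto dest: monoD)
  then have "subset.chain {J. ideal J R} (range I)"
    using assms(1) by (auto simp: pred_on.chain_def)
  then have "\<Union>(range I) \<in> range I"
    by (intro ideal_chain_is_trivial) auto
  then show ?thesis by blast
qed

lemma not_Q_algebra_imp_nonunit_prime:
  assumes "\<not> is_Q_algebra TYPE('a::comm_ring_1)"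
  obtains p where "prime p" "\<not> (of_nat p :: 'a) dvd 1"
proof -
  have "n > 0 \<longrightarrow> (of_nat n :: 'a) dvd 1" if units: "\<And>p. prime p \<Longrightarrow> (of_nat p :: 'a) dvd 1" for n
  proof (induction n rule: prime_divisors_induct)
    case (factor p n)
    then show ?case
      using units[of p] mult_dvd_mono[of "of_nat p :: 'a" 1 "of_nat n" 1] by auto
  qed auto
  with assms that show ?thesis unfolding is_Q_algebra_def by blast
qed

lemma prime_dvd_choose_prime_power:
  assumes "prime (p::nat)" "0 < n" "n < p ^ i"
  shows "p dvd (p ^ i choose n)"
proof (rule ccontr)
  assume not_dvd: "\<not> p dvd (p ^ i choose n)"
  have "n * (p ^ i choose n) = p ^ i * ((p ^ i - 1) choose (n - 1))"
    using times_binomial_minus1_eq[OF assms(2)] by simp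
  then have "p ^ i dvd n * (p ^ i choose n)"
    by simp
  moreover have "coprime (p ^ i) (p ^ i choose n)"
    using prime_imp_coprime[OF assms(1) not_dvd] by simp
  ultimately have "p ^ i dvd n"
    by (simp add: coprime_dvd_mult_left_iff)
  then show False
    using assms(2,3) by (simp add: nat_dvd_not_less)
qed

lemma of_nat_dvd_sha_mult_coeff:
  fixes a b :: "nat \<Rightarrow> 'a::comm_ring_1"
  assumes "of_nat p dvd b 0" "of_nat p dvd b q" "\<And>n. 0 < n \<Longrightarrow> n < q \<Longrightarrow> p dvd (q choose n)"
  shows "of_nat p dvd sha_mult lam a b q"
  unfolding sha_mult_def
proof (intro dvd_sum)
  fix n k assume n: "n \<in> {..q}"
  consider "n = 0" | "n = q" | "0 < n \<and> n < q" using n by fastforce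
  then show "of_nat p dvd of_nat (q choose n) * of_nat (n choose k) * lam ^ k * a (q - n + k) * b n"
  proof cases
    case 1
    then show ?thesis using assms(1) by (simp add: dvd_mult)
  next
    case 2
    then show ?thesis using assms(2) by (simp add: dvd_mult)
  next
    case 3
    then obtain c where "q choose n = p * c"
      using assms(3) by (meson dvdE)
    then have "(of_nat p :: 'a) dvd of_nat (q choose n)"
      by simp
    then show ?thesis by (simp add: mult.assoc dvd_mult2)
  qed
qed

lemma (in shuffle_ring) not_noetherian_if_not_Q_algebra:
  assumes "\<not> is_Q_algebra TYPE('a)"
  shows "\<not> noetherian_ring R"
proof
  assume noeth: "noetherian_ring R"
  obtain p where p: "prime p" "\<not> (of_nat p :: 'a) dvd 1"
    using not_Q_algebra_imp_nonunit_prime[OF assms] by blast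
  define I where "I j = {a \<in> carrier R. of_nat p dvd a 0 \<and> (\<forall>i>j. of_nat p dvd a (p ^ i))}" for j
  have "ideal (I j) R" for j
    unfolding I_def
  proof (rule ideal_of_closed_predicate)
    fix r and a :: "nat \<Rightarrow> 'a"
    assume a: "of_nat p dvd a 0 \<and> (\<forall>i>j. of_nat p dvd a (p ^ i))"
    have "of_nat p dvd sha_mult lam r a (p ^ i)" if "j < i" for i
      using a that prime_dvd_choose_prime_power[OF p(1)] by (intro of_nat_dvd_sha_mult_coeff) auto
    moreover have "of_nat p dvd sha_mult lam r a 0"
      using a by (intro of_nat_dvd_sha_mult_coeff) auto
    ultimately show
      "of_nat p dvd sha_mult lam r a 0 \<and> (\<forall>i>j. of_nat p dvd sha_mult lam r a (p ^ i))"
      by blast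
  qed (simp_all add: dvd_add)
  moreover have "I j \<subseteq> I (Suc j)" for j
    unfolding I_def by auto
  ultimately obtain D where "\<forall>d. I d \<subseteq> I D"
    using noetherian_ring.ascending_chain_stabilizes[OF noeth, of I] by blast
  then have D: "I (Suc D) \<subseteq> I D" by blast
  have "p ^ i \<noteq> p ^ Suc D" if "i \<noteq> Suc D" for i
    using prime_gt_1_nat[OF p(1)] that by (simp del: power_Suc)
  then have "sha_monomial (p ^ Suc D) 1 \<in> I (Suc D)"
    using monomial_mem prime_gt_0_nat[OF p(1)] unfolding I_def by (auto simp: sha_monomial_def)
  then have "sha_monomial (p ^ Suc D) 1 \<in> I D"
    by (rule subsetD[OF D])
  then have "of_nat p dvd sha_monomial (p ^ Suc D) (1::'a) (p ^ Suc D)"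
    unfolding I_def by blast
  with p(2) show False
    by (simp add: sha_monomial_def)
qed

lemma alternating_choose_sum:
  "(\<Sum>n=N..M. (-1) ^ (n - N) * (of_nat (M choose n) * of_nat (n choose N))) =
    (if M = N then 1 else (0::'a::comm_ring_1))"
proof (cases "N \<le> M")
  case True
  have "(\<Sum>n=N..M. (-1) ^ (n - N) * (of_nat (M choose n) * of_nat (n choose N)) :: 'a) =
      (\<Sum>n=N..M. of_nat (M choose N) * ((-1) ^ (n - N) * of_nat ((M - N) choose (n - N))))"
  proof (rule sum.cong[OF refl])
    fix n assume "n \<in> {N..M}"
    then have "(M choose n) * (n choose N) = (M choose N) * ((M - N) choose (n - N))"
      by (intro choose_mult) auto
    then have "of_nat (M choose n) * of_nat (n choose N) =
        (of_nat (M choose N) * of_nat ((M - N) choose (n - N)) :: 'a)"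
      by (metis of_nat_mult)
    then show "(-1) ^ (n - N) * (of_nat (M choose n) * of_nat (n choose N)) =
        (of_nat (M choose N) * ((-1) ^ (n - N) * of_nat ((M - N) choose (n - N))) :: 'a)"
      by (simp add: mult_ac)
  qed
  also have "\<dots> = of_nat (M choose N) * (\<Sum>n=N..M. (-1) ^ (n - N) * of_nat ((M - N) choose (n - N)))"
    by (simp add: sum_distrib_left)
  also have "(\<Sum>n=N..M. (-1) ^ (n - N) * of_nat ((M - N) choose (n - N))) =
      (\<Sum>i=0..M - N. (-1) ^ i * of_nat ((M - N) choose i) :: 'a)"
    using sum.shift_bounds_cl_nat_ivl[of "\<lambda>n. (-1) ^ (n - N) * of_nat ((M - N) choose (n - N)) :: 'a"
        0 N "M - N"] True
    by simp
  also have "of_nat (M choose N) * (\<Sum>i=0..M - N. (-1) ^ i * of_nat ((M - N) choose i)) =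
      (if M = N then 1 else (0::'a))"
    using choose_alternating_sum[of "M - N", where 'a = 'a] True by (simp add: atLeast0AtMost)
  finally show ?thesis .
qed simp

lemma sha_hat_ring_not_noetherian:
  fixes lam :: "'a::comm_ring_1"
  assumes "x \<noteq> 0" "\<forall>n. lam ^ n dvd x"
  shows "\<not> noetherian_ring (sha_hat_ring lam)"
proof
  assume noeth: "noetherian_ring (sha_hat_ring lam)"
  interpret shuffle_ring "sha_hat_ring lam" lam by (rule shuffle_ring_sha_hat_ring)
  obtain y where y: "\<And>n. x = lam ^ n * y n"
    using assms(2) unfolding dvd_def by metis
  define I where "I j = {a \<in> carrier (sha_hat_ring lam). \<forall>M\<ge>j. sha_eval lam M a = 0}" for j
  have "ideal (I j) (sha_hat_ring lam)" for j
    unfolding I_def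
    by (rule ideal_of_closed_predicate)
      (auto simp: sha_eval_zero sha_eval_add sha_eval_uminus sha_eval_mult)
  moreover have "I j \<subseteq> I (Suc j)" for j
    unfolding I_def by auto
  ultimately obtain N where "\<forall>j. I j \<subseteq> I N"
    using noetherian_ring.ascending_chain_stabilizes[OF noeth, of I] by blast
  then have N: "I (Suc N) \<subseteq> I N" by blast
  define f where "f n = (if N \<le> n then (-1) ^ (n - N) * of_nat (n choose N) * y n else 0)" for n
  have "sha_eval lam M f = (\<Sum>n=N..M. (-1) ^ (n - N) * (of_nat (M choose n) * of_nat (n choose N))) * x"
    for M
  proof -
    have "of_nat (M choose n) * lam ^ n * f n =
        (-1) ^ (n - N) * (of_nat (M choose n) * of_nat (n choose N)) * x"
      if "N \<le> n" for n
      using that by (simp add: f_def y[of n] mult_ac)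
    then show ?thesis
      unfolding sha_eval_def sum_distrib_right
      by (intro sum.mono_neutral_cong_right) (auto simp: f_def)
  qed
  then have eval_f: "sha_eval lam M f = (if M = N then x else 0)" for M
    by (simp add: alternating_choose_sum)
  then have "f \<in> I (Suc N)"
    unfolding I_def by (simp add: sha_hat_ring_def)
  then have "f \<in> I N" by (rule subsetD[OF N])
  then show False
    using eval_f[of N] assms(1) unfolding I_def by simp
qed

section \<open>Hilbert basis arguments\<close>

lemma cring_type_ring: "cring (type_ring :: 'a::comm_ring_1 ring)"
proof (rule cringI)
  show "abelian_group (type_ring :: 'a ring)"
  proof (rule abelian_groupI)
    fix x :: 'a
    show "\<exists>y\<in>carrier type_ring. y \<oplus>\<^bsub>type_ring\<^esub> x = \<zero>\<^bsub>type_ring\<^esub>"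
      by (rule bexI[of _ "- x"]) (simp_all add: type_ring_def)
  qed (auto simp: type_ring_def algebra_simps)
  show "comm_monoid (type_ring :: 'a ring)"
    by (rule comm_monoidI) (auto simp: type_ring_def algebra_simps)
qed (auto simp: type_ring_def algebra_simps)

lemma ideal_type_ringI:
  fixes S :: "'a::comm_ring_1 set"
  assumes "0 \<in> S" "\<And>x y. x \<in> S \<Longrightarrow> y \<in> S \<Longrightarrow> x + y \<in> S" "\<And>s x. x \<in> S \<Longrightarrow> s * x \<in> S"
  shows "ideal S type_ring"
proof -
  interpret cring "type_ring :: 'a ring" by (rule cring_type_ring)
  have "a_inv type_ring x = - x" for x :: 'a
    using r_neg[of x] by (simp add: type_ring_def eq_neg_iff_add_eq_0 add.commute)
  moreover have "- x \<in> S" if "x \<in> S" for x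
    using assms(3)[OF that, of "- 1"] by simp
  ultimately show ?thesis
    by (intro idealI ring_axioms add.subgroupI)
      (use assms in \<open>auto simp: type_ring_def mult.commute\<close>)
qed

lemma genideal_type_ring_lincomb:
  fixes G :: "'a::comm_ring_1 set"
  assumes "finite G" "c \<in> Idl\<^bsub>type_ring\<^esub> G"
  shows "\<exists>f. c = (\<Sum>g\<in>G. f g * g)"
proof -
  interpret cring "type_ring :: 'a ring" by (rule cring_type_ring)
  define S where "S = {x. \<exists>f. x = (\<Sum>g\<in>G. f g * g)}"
  have "ideal S type_ring"
  proof (rule ideal_type_ringI)
    show "0 \<in> S" unfolding S_def by (auto intro!: exI[of _ "\<lambda>_. 0"])
    show "x + y \<in> S" if xy: "x \<in> S" "y \<in> S" for x y
    proof -
      obtain f f' where "x = (\<Sum>g\<in>G. f g * g)" "y = (\<Sum>g\<in>G. f' g * g)"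
        using xy unfolding S_def by blast
      then show ?thesis
        unfolding S_def by (auto intro!: exI[of _ "\<lambda>g. f g + f' g"] simp: sum.distrib distrib_right)
    qed
    show "s * x \<in> S" if x: "x \<in> S" for s x
    proof -
      obtain f where "x = (\<Sum>g\<in>G. f g * g)"
        using x unfolding S_def by blast
      then show ?thesis
        unfolding S_def by (auto intro!: exI[of _ "\<lambda>g. s * f g"] simp: sum_distrib_left mult.assoc)
    qed
  qed
  moreover have "G \<subseteq> S"
  proof
    fix h assume "h \<in> G"
    have "(\<Sum>g\<in>G. (if g = h then 1 else 0) * g) = (\<Sum>g\<in>G. if g = h then g else 0)"
      by (rule sum.cong) auto
    with \<open>h \<in> G\<close> have "h = (\<Sum>g\<in>G. (if g = h then 1 else 0) * g)"
      using assms(1) by (simp add: sum.delta')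
    then show "h \<in> S" unfolding S_def by (intro CollectI exI)
  qed
  ultimately have "Idl\<^bsub>type_ring\<^esub> G \<subseteq> S" by (rule genideal_minimal)
  then show ?thesis using assms(2) S_def by auto
qed

lemma Q_algebra_inverse:
  fixes n :: nat
  assumes "is_Q_algebra TYPE('a)" "n > 0"
  obtains u :: "'a::comm_ring_1" where "of_nat n * u = 1"
  using assms unfolding is_Q_algebra_def by (metis dvdE)

(* For Z = {d<..} these are the leading coefficients of the elements of degree at most d,
   for Z = {..<d} the lowest coefficients of the elements of order at least d. *)
definition coeff_ideal :: "(nat \<Rightarrow> 'a::zero) set \<Rightarrow> nat set \<Rightarrow> nat \<Rightarrow> 'a set" where
  "coeff_ideal J Z d = {a d |a. a \<in> J \<and> vanishes_on Z a}"

context shuffle_ring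
begin

lemma ideal_coeff_ideal:
  assumes J: "ideal J R"
  shows "ideal (coeff_ideal J Z d) type_ring"
proof (rule ideal_type_ringI)
  show "0 \<in> coeff_ideal J Z d"
    unfolding coeff_ideal_def using ideal_zero_mem[OF J] by (force simp: vanishes_on_def)
  show "x + y \<in> coeff_ideal J Z d" if xy: "x \<in> coeff_ideal J Z d" "y \<in> coeff_ideal J Z d" for x y
  proof -
    obtain a b where "a \<in> J" "vanishes_on Z a" "x = a d" "b \<in> J" "vanishes_on Z b" "y = b d"
      using xy unfolding coeff_ideal_def by force
    then show ?thesis
      unfolding coeff_ideal_def using ideal_add_mem[OF J, of a b]
      by (intro CollectI exI[of _ "\<lambda>n. a n + b n"]) (auto simp: vanishes_on_def)
  qed
  show "s * x \<in> coeff_ideal J Z d" if x: "x \<in> coeff_ideal J Z d" for s x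
  proof -
    obtain a where "a \<in> J" "vanishes_on Z a" "x = a d"
      using x unfolding coeff_ideal_def by force
    moreover have "sha_mult lam (sha_monomial 0 s) a \<in> J"
      by (rule ideal_mult_mem[OF J monomial_mem \<open>a \<in> J\<close>])
    ultimately show ?thesis
      unfolding coeff_ideal_def sha_mult_monomial_zero_left
      by (intro CollectI exI[of _ "\<lambda>n. s * a n"]) (auto simp: vanishes_on_def)
  qed
qed

lemma leading_coeff_ideal_mono:
  assumes Q: "is_Q_algebra TYPE('a)" and J: "ideal J R"
  shows "coeff_ideal J {d<..} d \<subseteq> coeff_ideal J {Suc d<..} (Suc d)"
proof
  fix c assume "c \<in> coeff_ideal J {d<..} d"
  then obtain a where a: "a \<in> J" "vanishes_on {d<..} a" "a d = c"
    unfolding coeff_ideal_def by force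
  obtain u :: 'a where u: "of_nat (Suc d) * u = 1"
    using Q_algebra_inverse[OF Q, of "Suc d"] by blast
  define b where "b = sha_mult lam (sha_monomial 1 u) a"
  have one: "vanishes_on {1<..} (sha_monomial 1 u)"
    by (simp add: vanishes_on_def sha_monomial_def)
  have "b \<in> J"
    unfolding b_def by (rule ideal_mult_mem[OF J monomial_mem a(1)])
  moreover have "vanishes_on {Suc d<..} b"
    using sha_mult_vanishes_above(1)[OF one a(2)] by (simp add: b_def)
  moreover have "b (Suc d) = c"
    using sha_mult_vanishes_above(2)[OF one a(2)] u a(3)
    by (simp add: b_def sha_monomial_def mult_ac)
  ultimately show "c \<in> coeff_ideal J {Suc d<..} (Suc d)"
    unfolding coeff_ideal_def by blast
qed

lemma lowest_coeff_ideal_mono: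
  assumes Q: "is_Q_algebra TYPE('a)" and J: "ideal J R" and weight: "lam = 0"
  shows "coeff_ideal J {..<d} d \<subseteq> coeff_ideal J {..<Suc d} (Suc d)"
proof
  fix c assume "c \<in> coeff_ideal J {..<d} d"
  then obtain a where a: "a \<in> J" "vanishes_on {..<d} a" "a d = c"
    unfolding coeff_ideal_def by force
  obtain u :: 'a where u: "of_nat (Suc d) * u = 1"
    using Q_algebra_inverse[OF Q, of "Suc d"] by blast
  define b where "b = sha_mult 0 (sha_monomial 1 u) a"
  have one: "vanishes_on {..<1} (sha_monomial 1 u)"
    by (simp add: vanishes_on_def sha_monomial_def)
  have "b \<in> J"
    unfolding b_def using ideal_mult_mem[OF J monomial_mem a(1)] weight by simp
  moreover have "vanishes_on {..<Suc d} b"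
    using sha_mult_weight_zero_vanishes_below(1)[OF one a(2)] by (simp add: b_def)
  moreover have "b (Suc d) = c"
    using sha_mult_weight_zero_vanishes_below(2)[OF one a(2)] u a(3)
    by (simp add: b_def sha_monomial_def mult_ac)
  ultimately show "c \<in> coeff_ideal J {..<Suc d} (Suc d)"
    unfolding coeff_ideal_def by blast
qed

lemma mem_ideal_by_coeff_ideal:
  assumes I: "ideal I R" and K: "ideal K R" "K \<subseteq> I"
    and a: "a \<in> I" "vanishes_on Z a" "a d \<in> coeff_ideal K Z d"
    and smaller: "\<And>b. b \<in> I \<Longrightarrow> vanishes_on (insert d Z) b \<Longrightarrow> b \<in> K"
  shows "a \<in> K"
proof -
  obtain k where k: "k \<in> K" "vanishes_on Z k" "k d = a d"
    using a(3) unfolding coeff_ideal_def by force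
  have "(\<lambda>n. a n - k n) \<in> K"
    using smaller ideal_diff_mem[OF I a(1)] k a(2) K(2) by (auto simp: vanishes_on_def)
  from ideal_add_mem[OF K(1) this k(1)] show ?thesis
    by simp
qed

end

lemma (in shuffle_ring) coeff_ideal_generators:
  assumes noeth: "noetherian_ring (type_ring :: 'a ring)" and I: "ideal I R"
    and mono: "\<And>d. coeff_ideal I (Z d) d \<subseteq> coeff_ideal I (Z (Suc d)) (Suc d)"
  obtains D A G w where "finite A" "A \<subseteq> I"
    "\<And>d. coeff_ideal I (Z d) d \<subseteq> coeff_ideal I (Z D) D"
    "\<And>d. d \<le> D \<Longrightarrow> coeff_ideal I (Z d) d \<subseteq> coeff_ideal (Idl A) (Z d) d"
    "finite G" "coeff_ideal I (Z D) D = Idl\<^bsub>type_ring\<^esub> G"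
    "\<And>g. g \<in> G \<Longrightarrow> w g \<in> A \<and> vanishes_on (Z D) (w g) \<and> w g D = g"
proof -
  interpret C: noetherian_ring "type_ring :: 'a ring" by (rule noeth)
  define L where "L d = coeff_ideal I (Z d) d" for d
  have L: "ideal (L d) type_ring" for d
    unfolding L_def by (rule ideal_coeff_ideal[OF I])
  obtain D where D: "\<And>d. L d \<subseteq> L D"
    using C.ascending_chain_stabilizes[of L] L mono unfolding L_def by blast
  obtain G where G: "\<And>d. finite (G d)" "\<And>d. L d = Idl\<^bsub>type_ring\<^esub> (G d)"
    using C.finetely_gen[OF L] by metis
  have "G d \<subseteq> L d" for d
    using C.genideal_self[of "G d"] G(2) by (simp add: type_ring_def)
  then have witness: "\<exists>a. a \<in> I \<and> vanishes_on (Z d) a \<and> a d = g" if "g \<in> G d" for d g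
    using that unfolding L_def coeff_ideal_def by force
  define w where "w d g = (SOME a. a \<in> I \<and> vanishes_on (Z d) a \<and> a d = g)" for d g
  have w: "w d g \<in> I \<and> vanishes_on (Z d) (w d g) \<and> w d g d = g" if "g \<in> G d" for d g
    unfolding w_def by (rule someI_ex[OF witness[OF that]])
  define A where "A = (\<Union>d\<le>D. w d ` G d)"
  have A: "finite A" "A \<subseteq> I"
    unfolding A_def using G(1) w by auto
  then have "A \<subseteq> carrier R"
    using ideal.Icarr[OF I] by blast
  then have K: "ideal (Idl A) R" "A \<subseteq> Idl A"
    by (rule genideal_ideal, rule genideal_self)
  have "L d \<subseteq> coeff_ideal (Idl A) (Z d) d" if "d \<le> D" for d
  proof -
    have "G d \<subseteq> coeff_ideal (Idl A) (Z d) d"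
    proof
      fix g assume g: "g \<in> G d"
      then have "w d g \<in> Idl A"
        using K(2) that unfolding A_def by blast
      with w[OF g] show "g \<in> coeff_ideal (Idl A) (Z d) d"
        unfolding coeff_ideal_def by (intro CollectI exI[of _ "w d g"]) auto
    qed
    then show ?thesis
      unfolding G(2) by (rule C.genideal_minimal[OF ideal_coeff_ideal[OF K(1)]])
  qed
  moreover have "w D g \<in> A" if "g \<in> G D" for g
    using that unfolding A_def by blast
  ultimately show thesis
    using that[of A D "G D" "w D"] A D G w unfolding L_def by blast
qed

lemma (in shuffle_ring) noetherian_if_finitely_supported:
  assumes Q: "is_Q_algebra TYPE('a)" and noeth: "noetherian_ring (type_ring :: 'a ring)"
    and carrier: "carrier R = {a. finite {n. a n \<noteq> 0}}"
  shows "noetherian_ring R"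
proof (rule noetherian_ringI)
  fix I assume I: "ideal I R"
  let ?L = "\<lambda>J d. coeff_ideal J {d<..} d"
  obtain D A where A: "finite A" "A \<subseteq> I"
    and stable: "\<And>d. ?L I d \<subseteq> ?L I D"
    and below: "\<And>d. d \<le> D \<Longrightarrow> ?L I d \<subseteq> ?L (Idl A) d"
    using leading_coeff_ideal_mono[OF Q I] by (rule coeff_ideal_generators[OF noeth I]) blast
  have A_carrier: "A \<subseteq> carrier R"
    using A(2) ideal.Icarr[OF I] by blast
  define K where "K = Idl A"
  have K: "ideal K R" "K \<subseteq> I"
    unfolding K_def using A_carrier A(2) by (simp_all add: genideal_ideal genideal_minimal[OF I])
  have coeffs: "?L I d \<subseteq> ?L K d" for d
  proof (cases "d \<le> D")
    case False
    have "?L I d \<subseteq> ?L I D" by (rule stable)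
    also have "\<dots> \<subseteq> ?L K D" unfolding K_def by (rule below) simp
    also have "\<dots> \<subseteq> ?L K d"
      using lift_Suc_mono_le[of "?L K", OF leading_coeff_ideal_mono[OF Q K(1)]] False by simp
    finally show ?thesis .
  qed (use below K_def in simp)
  have degree_induction: "b \<in> K" if "b \<in> I" "vanishes_on {d..} b" for b d
    using that
  proof (induction d arbitrary: b)
    case 0
    then have "b = (\<lambda>n. 0)" by (auto simp: vanishes_on_def)
    then show ?case using ideal_zero_mem[OF K(1)] by simp
  next
    case (Suc d)
    have "{Suc d..} = {d<..}" "insert d {d<..} = {d..}" by auto
    with Suc show ?case
      using coeffs[of d]
      by (intro mem_ideal_by_coeff_ideal[OF I K, of b "{d<..}" d]) (auto simp: coeff_ideal_def)
  qed
  have "I \<subseteq> K"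
  proof
    fix a assume a: "a \<in> I"
    then obtain d where "vanishes_on {d<..} a"
      using ideal.Icarr[OF I] carrier finite_support_iff_vanishes_above by blast
    then have "vanishes_on {Suc d..} a"
      by (simp add: vanishes_on_def)
    with a show "a \<in> K" by (rule degree_induction)
  qed
  with K(2) A A_carrier show "\<exists>A \<subseteq> carrier R. finite A \<and> I = Idl A"
    unfolding K_def by blast
qed

lemma sha_mult_weight_zero_eq_sum_monomials:
  "sha_mult 0 a b p = (\<Sum>s\<le>p. sha_mult 0 (sha_monomial s (a s)) b p)"
proof -
  have "(\<Sum>s\<le>p. sha_mult 0 (sha_monomial s (a s)) b p) =
      (\<Sum>s\<le>p. \<Sum>n\<le>p. if s = p - n then of_nat (p choose n) * a (p - n) * b n else 0)"
    unfolding sha_mult_weight_zero sha_monomial_def by (intro sum.cong refl) auto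
  also have "\<dots> = (\<Sum>n\<le>p. \<Sum>s\<le>p. if s = p - n then of_nat (p choose n) * a (p - n) * b n else 0)"
    by (rule sum.swap)
  also have "\<dots> = sha_mult 0 a b p"
    unfolding sha_mult_weight_zero by (intro sum.cong refl) simp
  finally show ?thesis ..
qed

lemma sha_mult_weight_zero_correction:
  fixes w :: "'a \<Rightarrow> nat \<Rightarrow> 'a::comm_ring_1"
  assumes w: "\<And>g. g \<in> G \<Longrightarrow> vanishes_on {..<D} (w g) \<and> w g D = g"
    and v: "of_nat ((t + D) choose D) * v = 1"
    and r: "vanishes_on {..<t + D} r" "r (t + D) = (\<Sum>g\<in>G. c g * g)"
  shows "vanishes_on {..<Suc (t + D)}
    (\<lambda>n. r n - (\<Sum>g\<in>G. sha_mult 0 (sha_monomial t (c g * v)) (w g) n))"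
proof -
  have monomial: "vanishes_on {..<t} (sha_monomial t (c g * v))" for g
    by (simp add: vanishes_on_def sha_monomial_def)
  have "vanishes_on {..<t + D} (sha_mult 0 (sha_monomial t (c g * v)) (w g))"
    and "sha_mult 0 (sha_monomial t (c g * v)) (w g) (t + D) = c g * g" if "g \<in> G" for g
  proof -
    show "vanishes_on {..<t + D} (sha_mult 0 (sha_monomial t (c g * v)) (w g))"
      using sha_mult_weight_zero_vanishes_below(1)[OF monomial, of D "w g"] w[OF that] by simp
    have "sha_mult 0 (sha_monomial t (c g * v)) (w g) (t + D) =
        (of_nat ((t + D) choose D) * v) * (c g * g)"
      using sha_mult_weight_zero_vanishes_below(2)[OF monomial, of D "w g"] w[OF that]
      by (simp add: sha_monomial_def mult_ac)
    then show "sha_mult 0 (sha_monomial t (c g * v)) (w g) (t + D) = c g * g"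
      by (simp add: v)
  qed
  with r show ?thesis
    by (auto simp: vanishes_on_def less_Suc_eq)
qed

(* The corrections made at the successive orders assemble into coefficient sequences H g,
   because sha_mult 0 a b p depends only on a 0, ..., a p. *)
lemma sha_mult_weight_zero_successive_approximation:
  fixes S :: "(nat \<Rightarrow> 'a::comm_ring_1) set" and G :: "'b set" and w :: "'b \<Rightarrow> nat \<Rightarrow> 'a"
  defines "improve t r c \<equiv> (\<lambda>n. r n - (\<Sum>g\<in>G. sha_mult 0 (sha_monomial t (c g)) (w g) n))"
  assumes step: "\<And>t r. r \<in> S \<Longrightarrow> vanishes_on {..<t + D} r \<Longrightarrow>
      \<exists>c. improve t r c \<in> S \<and> vanishes_on {..<Suc t + D} (improve t r c)"
    and b: "b \<in> S" "vanishes_on {..<D} b"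
  obtains H where "b = (\<lambda>p. \<Sum>g\<in>G. sha_mult 0 (H g) (w g) p)"
proof -
  define c where "c t r = (SOME c. improve t r c \<in> S \<and> vanishes_on {..<Suc t + D} (improve t r c))"
    for t r
  define rem where "rem = rec_nat b (\<lambda>t r. improve t r (c t r))"
  have rem_0: "rem 0 = b" and rem_Suc: "rem (Suc t) = improve t (rem t) (c t (rem t))" for t
    by (simp_all add: rem_def)
  have rem: "rem t \<in> S \<and> vanishes_on {..<t + D} (rem t)" for t
  proof (induction t)
    case (Suc t)
    then show ?case
      unfolding rem_Suc c_def using someI_ex[OF step] by simp
  qed (use b in \<open>simp add: rem_0\<close>)
  define H where "H g s = c s (rem s) g" for g s
  have "b p = (\<Sum>g\<in>G. sha_mult 0 (H g) (w g) p)" for p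
  proof -
    have "rem (Suc p) p = 0"
      using rem[of "Suc p"] by (simp add: vanishes_on_def)
    then have "b p = (\<Sum>s<Suc p. rem s p - rem (Suc s) p)"
      using sum_lessThan_telescope'[of "\<lambda>s. rem s p" "Suc p"] by (simp add: rem_0)
    also have "\<dots> = (\<Sum>s\<le>p. \<Sum>g\<in>G. sha_mult 0 (sha_monomial s (H g s)) (w g) p)"
      unfolding lessThan_Suc_atMost by (simp add: rem_Suc improve_def H_def)
    also have "\<dots> = (\<Sum>g\<in>G. sha_mult 0 (H g) (w g) p)"
      by (subst sum.swap) (simp add: sha_mult_weight_zero_eq_sum_monomials[symmetric])
    finally show ?thesis .
  qed
  then show thesis
    using that by blast
qed

lemma (in shuffle_ring) weight_zero_high_order_combination:
  fixes w :: "'a \<Rightarrow> nat \<Rightarrow> 'a"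
  assumes Q: "is_Q_algebra TYPE('a)" and weight: "lam = 0" and I: "ideal I R" and G: "finite G"
    and w: "\<And>g. g \<in> G \<Longrightarrow> w g \<in> I \<and> vanishes_on {..<D} (w g) \<and> w g D = g"
    and coeffs: "\<And>n. D \<le> n \<Longrightarrow> coeff_ideal I {..<n} n \<subseteq> Idl\<^bsub>type_ring\<^esub> G"
    and b: "b \<in> I" "vanishes_on {..<D} b"
  obtains H where "b = (\<lambda>p. \<Sum>g\<in>G. sha_mult 0 (H g) (w g) p)"
proof (rule sha_mult_weight_zero_successive_approximation[OF _ b])
  fix t r assume r: "r \<in> I" "vanishes_on {..<t + D} r"
  then have "r (t + D) \<in> coeff_ideal I {..<t + D} (t + D)"
    unfolding coeff_ideal_def by blast
  then obtain c where c: "r (t + D) = (\<Sum>g\<in>G. c g * g)"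
    using coeffs[of "t + D"] genideal_type_ring_lincomb[OF G] by auto
  obtain v :: 'a where v: "of_nat ((t + D) choose D) * v = 1"
    using Q_algebra_inverse[OF Q, of "(t + D) choose D"] by auto
  let ?r' = "\<lambda>n. r n - (\<Sum>g\<in>G. sha_mult 0 (sha_monomial t (c g * v)) (w g) n)"
  have "vanishes_on {..<Suc t + D} ?r'"
    using sha_mult_weight_zero_correction[where v = v and r = r] w v r(2) c by auto
  moreover have "?r' \<in> I"
    using ideal_mult_mem[OF I monomial_mem] w weight r(1)
    by (intro ideal_diff_mem[OF I] ideal_sum_mem[OF I G]) auto
  ultimately show "\<exists>c. (\<lambda>n. r n - (\<Sum>g\<in>G. sha_mult 0 (sha_monomial t (c g)) (w g) n)) \<in> I \<and>
      vanishes_on {..<Suc t + D} (\<lambda>n. r n - (\<Sum>g\<in>G. sha_mult 0 (sha_monomial t (c g)) (w g) n))"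
    by (intro exI[of _ "\<lambda>g. c g * v"]) simp
qed

lemma (in shuffle_ring) noetherian_if_weight_zero:
  assumes Q: "is_Q_algebra TYPE('a)" and noeth: "noetherian_ring (type_ring :: 'a ring)"
    and weight: "lam = 0" and carrier: "carrier R = UNIV"
  shows "noetherian_ring R"
proof (rule noetherian_ringI)
  fix I assume I: "ideal I R"
  let ?L = "\<lambda>J d. coeff_ideal J {..<d} d"
  obtain D A G w where A: "finite A" "A \<subseteq> I"
    and stable: "\<And>d. ?L I d \<subseteq> ?L I D"
    and below: "\<And>d. d \<le> D \<Longrightarrow> ?L I d \<subseteq> ?L (Idl A) d"
    and G: "finite G" "?L I D = Idl\<^bsub>type_ring\<^esub> G"
    and w: "\<And>g. g \<in> G \<Longrightarrow> w g \<in> A \<and> vanishes_on {..<D} (w g) \<and> w g D = g"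
    using lowest_coeff_ideal_mono[OF Q I weight] by (rule coeff_ideal_generators[OF noeth I]) blast
  have A_carrier: "A \<subseteq> carrier R"
    using A(2) ideal.Icarr[OF I] by blast
  define K where "K = Idl A"
  have K: "ideal K R" "K \<subseteq> I" "A \<subseteq> K"
    unfolding K_def using A_carrier A(2)
    by (simp_all add: genideal_ideal genideal_minimal[OF I] genideal_self)
  have high_order: "b \<in> K" if b: "b \<in> I" "vanishes_on {..<D} b" for b
  proof -
    obtain H where "b = (\<lambda>p. \<Sum>g\<in>G. sha_mult 0 (H g) (w g) p)"
      using weight_zero_high_order_combination[OF Q weight I G(1) _ _ b, of w] w A(2) stable G(2)
      by blast
    also have "\<dots> \<in> K"
      using ideal_mult_mem[OF K(1)] w K(3) weight carrier
      by (intro ideal_sum_mem[OF K(1) G(1)]) auto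
    finally show ?thesis .
  qed
  have "b \<in> K" if "b \<in> I" "vanishes_on {..<d} b" "d \<le> D" for b d
    using that(3,1,2)
  proof (induction d arbitrary: b rule: inc_induct)
    case base
    then show ?case by (rule high_order)
  next
    case (step d)
    have "insert d {..<d} = {..<Suc d}" by auto
    with step show ?case
      using below[of d] unfolding K_def[symmetric]
      by (intro mem_ideal_by_coeff_ideal[OF I K(1,2), of b "{..<d}" d]) (auto simp: coeff_ideal_def)
  qed
  then have "I \<subseteq> K"
    by (auto simp: vanishes_on_def)
  with K(2) A A_carrier show "\<exists>A \<subseteq> carrier R. finite A \<and> I = Idl A"
    unfolding K_def by blast
qed

theorem theorem3p1:
  fixes lam :: "'a::comm_ring_1"
  shows "(is_Q_algebra TYPE('a) \<and> noetherian_ring (type_ring :: 'a ring)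
            \<longrightarrow> noetherian_ring (sha_ring lam))
       \<and> (is_Q_algebra TYPE('a) \<and> noetherian_ring (type_ring :: 'a ring) \<and> lam = 0
            \<longrightarrow> noetherian_ring (sha_hat_ring lam))
       \<and> (is_Q_algebra TYPE('a) \<and> (\<forall>x. lam * x = 0 \<longrightarrow> x = 0)
            \<and> (\<exists>x. x \<noteq> 0 \<and> (\<forall>n::nat. lam ^ n dvd x))
            \<longrightarrow> \<not> noetherian_ring (sha_hat_ring lam))
       \<and> (\<not> is_Q_algebra TYPE('a)
            \<longrightarrow> \<not> noetherian_ring (sha_ring lam) \<and> \<not> noetherian_ring (sha_hat_ring lam))"
proof (intro conjI impI)
  assume "is_Q_algebra TYPE('a) \<and> noetherian_ring (type_ring :: 'a ring)"
  then show "noetherian_ring (sha_ring lam)"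
    using shuffle_ring.noetherian_if_finitely_supported[OF shuffle_ring_sha_ring[of lam]]
    by (simp add: sha_ring_def)
next
  assume "is_Q_algebra TYPE('a) \<and> noetherian_ring (type_ring :: 'a ring) \<and> lam = 0"
  then show "noetherian_ring (sha_hat_ring lam)"
    using shuffle_ring.noetherian_if_weight_zero[OF shuffle_ring_sha_hat_ring[of lam]]
    by (simp add: sha_hat_ring_def)
next
  assume "is_Q_algebra TYPE('a) \<and> (\<forall>x. lam * x = 0 \<longrightarrow> x = 0)
            \<and> (\<exists>x. x \<noteq> 0 \<and> (\<forall>n::nat. lam ^ n dvd x))"
  then show "\<not> noetherian_ring (sha_hat_ring lam)"
    using sha_hat_ring_not_noetherian by blast
next
  assume "\<not> is_Q_algebra TYPE('a)"
  then show "\<not> noetherian_ring (sha_ring lam)" "\<not> noetherian_ring (sha_hat_ring lam)"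
    using shuffle_ring.not_noetherian_if_not_Q_algebra[OF shuffle_ring_sha_ring[of lam]]
      shuffle_ring.not_noetherian_if_not_Q_algebra[OF shuffle_ring_sha_hat_ring[of lam]]
    by blast+
qed

end
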